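(* Let $\alpha\ge1$ and suppose an algorithm for the maximum density subtree problem is given which, on any instance, returns a subtree whose density is at least $1/\alpha$ times the maximum density. Then the greedy algorithm (described in the context) using this algorithm is a $4\alpha$-approximation algorithm for the expanding search problem: the expanding search $\sigma^{\mathrm g}$ it returns satisfies $c(\sigma^{\mathrm g})\le 4\alpha\,c(\sigma^\star)$, where $\sigma^\star$ is an optimal expanding search.
   Context: Expanding search problem: $G=(V,E)$ is a connected graph with root $r$, probabilities $p_v\in[0,1]$ with $p_r=0$, $\sum_v p_v=1$, and edge lengths $\lambda_e>0$; $n=|V\setminus\{r\}|$. An expanding search is a sequence of edges $\sigma=(e_1,\dots,e_n)$ with $r\in e_1$ such that each $e_k$ connects an unvisited vertex to a previously visited vertex (so $\{e_1,\dots,e_k\}$ is a tree containing $r$ for every $k$). For $v\in V$, $\lambda(v,\sigma)=\sum_{i=1}^k\lambda_{e_i}$ where $e_k$ is the first edge of $\sigma$ containing $v$ (and $\lambda(r,\sigma)=0$). The search cost is $c(\sigma)=\sum_{v\in V}p_v\lambda(v,\sigma)$; the problem is to minimize it. Maximum density subtree problem: given a graph $H$ with root $r$, nonnegative vertex weights $p$ and positive edge lengths $\ell$, among subtrees $T$ of $H$ containing $r$ with positive total length, maximize the density $\rho(T)=p(V[T])/\ell(E[T])$ (sums of weights and lengths). Contraction: for $S\subseteq V$ with $r\in S$, $G/S$ has vertex set $(V\setminus S)\cup\{r\}$ and edges: all $\{v,w\}\in E$ with $v,w\in V\setminus S$ (length $\lambda_{\{v,w\}}$), and $\{r,w\}$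 for each $w\in V\setminus S$ for which $C(w,S)=\{\{v,w\}\in E: v\in S\}$ is nonempty, with length $\min_{e'\in C(w,S)}\lambda_{e'}$. Denote these lengths $\lambda^S$. Greedy algorithm: set $i\gets1$, $S\gets\{r\}$. While some $v\in V\setminus S$ has $p_v>0$: let $T_i$ be the tree returned by the given approximation algorithm for the maximum density subtree problem on $G/S$ with probabilities $(p_v)$ and lengths $\lambda^S$; let $\sigma_i$ be an arbitrary expanding search of tree $T_i$ (from $r$); set $S\gets S\cup V[T_i]$ and increment $i$. Finally let $\sigma^{\mathrm g}$ be the expanding search obtained by concatenating $\sigma_1,\sigma_2,\dots$ and replacing each edge incident to $r$ in a contracted graph by a corresponding length-minimizing edge of $G$ (vertices of zero probability left unvisited are appended arbitrarily). *)

theory Defs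
  imports Main Complex_Main
begin

definition adj :: "'v set set \<Rightarrow> ('v \<times> 'v) set" where
  "adj F = {(u, w). {u, w} \<in> F}"

definition simple_graph :: "'v set \<Rightarrow> 'v set set \<Rightarrow> bool" where
  "simple_graph V E \<longleftrightarrow> finite V \<and>
     (\<forall>e\<in>E. \<exists>u w. e = {u, w} \<and> u \<noteq> w \<and> u \<in> V \<and> w \<in> V)"

definition connected_from :: "'v set \<Rightarrow> 'v set set \<Rightarrow> 'v \<Rightarrow> bool" where
  "connected_from V E r \<longleftrightarrow> (\<forall>v\<in>V. (r, v) \<in> (adj E)\<^sup>*)"

definition tree_verts :: "'v \<Rightarrow> 'v set set \<Rightarrow> 'v set" where
  "tree_verts s T = insert s (\<Union>T)"

definition rooted_subtree :: "'v set set \<Rightarrow> 'v \<Rightarrow> 'v set set \<Rightarrow> bool" where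
  "rooted_subtree F s T \<longleftrightarrow> T \<subseteq> F \<and> finite T \<and>
     card (tree_verts s T) = card T + 1 \<and> connected_from (tree_verts s T) T s"

definition mds_feasible :: "'v set set \<Rightarrow> ('v set \<Rightarrow> real) \<Rightarrow> 'v \<Rightarrow> 'v set set \<Rightarrow> bool" where
  "mds_feasible F len s T \<longleftrightarrow> rooted_subtree F s T \<and> sum len T > 0"

definition density :: "('v \<Rightarrow> real) \<Rightarrow> ('v set \<Rightarrow> real) \<Rightarrow> 'v \<Rightarrow> 'v set set \<Rightarrow> real" where
  "density q len s T = sum q (tree_verts s T) / sum len T"

definition max_density ::
  "'v set set \<Rightarrow> ('v set \<Rightarrow> real) \<Rightarrow> ('v \<Rightarrow> real) \<Rightarrow> 'v \<Rightarrow> real" where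
  "max_density F len q s = Max (density q len s ` {T. mds_feasible F len s T})"

text \<open>A valid instance (H = (W,F), root s, nonnegative weights q, positive lengths len)
  having at least one feasible subtree (so that the maximum density is defined).\<close>
definition mds_instance ::
  "'v set \<Rightarrow> 'v set set \<Rightarrow> ('v set \<Rightarrow> real) \<Rightarrow> ('v \<Rightarrow> real) \<Rightarrow> 'v \<Rightarrow> bool" where
  "mds_instance W F len q s \<longleftrightarrow> simple_graph W F \<and> s \<in> W \<and>
     (\<forall>e\<in>F. len e > 0) \<and> (\<forall>v\<in>W. q v \<ge> 0) \<and> (\<exists>T. mds_feasible F len s T)"

type_synonym 'v mds_algorithm =
  "'v set \<Rightarrow> 'v set set \<Rightarrow> ('v set \<Rightarrow> real) \<Rightarrow> ('v \<Rightarrow> real) \<Rightarrow> 'v \<Rightarrow> 'v set set"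

definition mds_approx :: "real \<Rightarrow> 'v mds_algorithm \<Rightarrow> bool" where
  "mds_approx \<alpha> A \<longleftrightarrow> (\<forall>W F len q s. mds_instance W F len q s \<longrightarrow>
      mds_feasible F len s (A W F len q s) \<and>
      density q len s (A W F len q s) \<ge> max_density F len q s / \<alpha>)"

definition visited :: "'v \<Rightarrow> 'v set list \<Rightarrow> nat \<Rightarrow> 'v set" where
  "visited r \<sigma> k = insert r (\<Union>(set (take k \<sigma>)))"

definition expanding_search :: "'v set \<Rightarrow> 'v set set \<Rightarrow> 'v \<Rightarrow> 'v set list \<Rightarrow> bool" where
  "expanding_search W F r \<sigma> \<longleftrightarrow> length \<sigma> = card (W - {r}) \<and>
     (\<forall>k < length \<sigma>. \<sigma> ! k \<in> F \<and>
        (\<exists>u w. \<sigma> ! k = {u, w} \<and> u \<in> visited r \<sigma> k \<and> w \<notin> visited r \<sigma> k))"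

definition search_time :: "('v set \<Rightarrow> real) \<Rightarrow> 'v \<Rightarrow> 'v set list \<Rightarrow> 'v \<Rightarrow> real" where
  "search_time lam r \<sigma> v = (if v = r then 0 else
     sum_list (map lam (take (Suc (LEAST k. k < length \<sigma> \<and> v \<in> \<sigma> ! k)) \<sigma>)))"

definition search_cost ::
  "'v set \<Rightarrow> ('v \<Rightarrow> real) \<Rightarrow> ('v set \<Rightarrow> real) \<Rightarrow> 'v \<Rightarrow> 'v set list \<Rightarrow> real" where
  "search_cost V p lam r \<sigma> = (\<Sum>v\<in>V. p v * search_time lam r \<sigma> v)"

definition contr_edges :: "'v set \<Rightarrow> 'v set set \<Rightarrow> 'v \<Rightarrow> 'v set \<Rightarrow> 'v set set" where
  "contr_edges V E r S = {e \<in> E. e \<inter> S = {}} \<union>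
     {{r, w} | w. w \<in> V - S \<and> (\<exists>v\<in>S. {v, w} \<in> E)}"

definition contr_len :: "'v set set \<Rightarrow> ('v set \<Rightarrow> real) \<Rightarrow> 'v \<Rightarrow> 'v set \<Rightarrow> 'v set \<Rightarrow> real" where
  "contr_len E lam r S e = (if e \<inter> S = {} then lam e
     else Min (lam ` {e' \<in> E. e' \<inter> S \<noteq> {} \<and> e' - S = e - {r}}))"

definition contr_edge :: "'v \<Rightarrow> 'v set \<Rightarrow> 'v set \<Rightarrow> 'v set" where
  "contr_edge r S e = (if e \<inter> S = {} then e else insert r (e - S))"

definition greedy_tree ::
  "'v set \<Rightarrow> 'v set set \<Rightarrow> ('v set \<Rightarrow> real) \<Rightarrow> ('v \<Rightarrow> real) \<Rightarrow> 'v \<Rightarrow> 'v mds_algorithm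
    \<Rightarrow> 'v set \<Rightarrow> 'v set set" where
  "greedy_tree V E lam p r A S =
     A (insert r (V - S)) (contr_edges V E r S) (contr_len E lam r S) p r"

primrec greedy_set ::
  "'v set \<Rightarrow> 'v set set \<Rightarrow> ('v set \<Rightarrow> real) \<Rightarrow> ('v \<Rightarrow> real) \<Rightarrow> 'v \<Rightarrow> 'v mds_algorithm
    \<Rightarrow> nat \<Rightarrow> 'v set" where
  "greedy_set V E lam p r A 0 = {r}"
| "greedy_set V E lam p r A (Suc i) =
     greedy_set V E lam p r A i \<union>
     tree_verts r (greedy_tree V E lam p r A (greedy_set V E lam p r A i))"

definition greedy_continue :: "'v set \<Rightarrow> ('v \<Rightarrow> real) \<Rightarrow> 'v set \<Rightarrow> bool" where
  "greedy_continue V p S \<longleftrightarrow> (\<exists>v \<in> V - S. p v > 0)"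

text \<open>b is an admissible block for iteration i: b consists of edges of G; its image in
  G/S is an expanding search (from r) of the tree T_i; each edge incident to r in G/S
  has been replaced by a length-minimizing edge of G.\<close>
definition greedy_block ::
  "'v set \<Rightarrow> 'v set set \<Rightarrow> ('v set \<Rightarrow> real) \<Rightarrow> ('v \<Rightarrow> real) \<Rightarrow> 'v \<Rightarrow> 'v mds_algorithm
    \<Rightarrow> nat \<Rightarrow> 'v set list \<Rightarrow> bool" where
  "greedy_block V E lam p r A i b \<longleftrightarrow>
     (let S = greedy_set V E lam p r A i; T = greedy_tree V E lam p r A S in
       expanding_search (tree_verts r T) T r (map (contr_edge r S) b) \<and>
       (\<forall>e \<in> set b. e \<in> E \<and>
          (e \<inter> S \<noteq> {} \<longrightarrow> lam e = contr_len E lam r S (contr_edge r S e))))"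

text \<open>\<sigma> is a possible output of the greedy algorithm: the concatenation of admissible
  blocks for the iterations 0..m-1 (m = number of iterations of the while loop),
  followed by arbitrary edges visiting the remaining (zero-probability) vertices,
  such that the whole is an expanding search of G.\<close>
definition greedy_output ::
  "'v set \<Rightarrow> 'v set set \<Rightarrow> ('v set \<Rightarrow> real) \<Rightarrow> ('v \<Rightarrow> real) \<Rightarrow> 'v \<Rightarrow> 'v mds_algorithm
    \<Rightarrow> 'v set list \<Rightarrow> bool" where
  "greedy_output V E lam p r A \<sigma> \<longleftrightarrow>
     (\<exists>m bs tl.
        (\<forall>i < m. greedy_continue V p (greedy_set V E lam p r A i)) \<and>
        \<not> greedy_continue V p (greedy_set V E lam p r A m) \<and>
        length bs = m \<and> (\<forall>i < m. greedy_block V E lam p r A i (bs ! i)) \<and>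
        \<sigma> = concat bs @ tl \<and>
        expanding_search V E r \<sigma>)"

end

(*
  Let S i be the explored set before iteration i, R i = p(V - S i) the probability not yet
  found, and T i the tree chosen in iteration i, of length L i and density \<rho> i in G/S i.
  Every vertex first reached in iteration i is found by the greedy search within
  L 0 + ... + L i, so its cost is at most \<Sum>i L i * R i.

  Conversely, contracting S i maps the part of any expanding search \<sigma> of length at most x
  onto a subtree of G/S i; as no subtree has density above \<alpha> * \<rho> i, by time x the
  search \<sigma> has found probability at most \<alpha> * \<rho> i * x outside S i. Hence at time
  t i = R i / (2 \<alpha> \<rho> i) at least R i / 2 of probability is still to be found by \<sigma>.
  Since L i * R i = 2 \<alpha> (R i - R (i+1)) t i, comparing the step functions
  x \<mapsto> \<Sum>{R i - R (i+1) | x \<le> t i} and x \<mapsto> 2 p{v | x \<le> \<lambda>(v,\<sigma>)} and integrating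
  over x gives \<Sum>i L i * R i \<le> 4 \<alpha> c(\<sigma>).
*)
theory Submission
  imports Defs "HOL-Analysis.Henstock_Kurzweil_Integration"
begin

section \<open>Layer-cake comparison of weighted sums\<close>

lemma has_integral_step:
  fixes a c B :: real
  assumes "0 \<le> c" "c \<le> B"
  shows "((\<lambda>x. if x \<le> c then a else 0) has_integral (a * c)) {0..B}"
proof -
  have "((\<lambda>x. a) has_integral (a * c)) {0..c}"
    using has_integral_const_real[of a 0 c] assms by (simp add: mult.commute)
  then have "((\<lambda>x. if x \<in> {0..c} then a else 0) has_integral (a * c)) {0..B}"
    using assms by (subst has_integral_restrict) auto
  then show ?thesis
    by (rule has_integral_eq[rotated]) auto
qed

text \<open>\<open>\<Sum>i. a i * s i\<close> is the integral over \<open>x \<ge> 0\<close> of the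
  total weight \<open>a i\<close> of the indices with \<open>x \<le> s i\<close>.\<close>
lemma sum_mult_le_of_tails_le:
  fixes a s :: "'i \<Rightarrow> real" and b u :: "'j \<Rightarrow> real"
  assumes "finite I" "finite J" "\<forall>i\<in>I. 0 \<le> s i" "\<forall>j\<in>J. 0 \<le> u j"
    and tails: "\<And>x. 0 \<le> x \<Longrightarrow>
      (\<Sum>i\<in>I. if x \<le> s i then a i else 0) \<le> (\<Sum>j\<in>J. if x \<le> u j then b j else 0)"
  shows "(\<Sum>i\<in>I. a i * s i) \<le> (\<Sum>j\<in>J. b j * u j)"
proof -
  define B where "B = Max (insert 0 (s ` I \<union> u ` J))"
  have "s i \<le> B" if "i \<in> I" for i
    unfolding B_def using assms that by (intro Max_ge) auto
  then have "((\<lambda>x. \<Sum>i\<in>I. if x \<le> s i then a i else 0) has_integral (\<Sum>i\<in>I. a i * s i)) {0..B}"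
    using assms by (intro has_integral_sum) (auto intro!: has_integral_step)
  moreover have "u j \<le> B" if "j \<in> J" for j
    unfolding B_def using assms that by (intro Max_ge) auto
  then have "((\<lambda>x. \<Sum>j\<in>J. if x \<le> u j then b j else 0) has_integral (\<Sum>j\<in>J. b j * u j)) {0..B}"
    using assms by (intro has_integral_sum) (auto intro!: has_integral_step)
  ultimately show ?thesis
    using tails by (rule has_integral_le) simp
qed

lemma telescoping_sum_mult_le:
  fixes R t :: "nat \<Rightarrow> real" and p \<tau> :: "'v \<Rightarrow> real"
  assumes "finite V" "\<forall>v\<in>V. 0 \<le> p v \<and> 0 \<le> \<tau> v" "\<forall>i<m. 0 \<le> t i"
    and R_decr: "\<forall>i<m. R (Suc i) \<le> R i" and "0 \<le> R m" and "0 \<le> c"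
    and R_le: "\<forall>i<m. R i \<le> c * (\<Sum>v\<in>V. if t i \<le> \<tau> v then p v else 0)"
  shows "(\<Sum>i<m. (R i - R (Suc i)) * t i) \<le> c * (\<Sum>v\<in>V. p v * \<tau> v)"
proof -
  define M where "M x = c * (\<Sum>v\<in>V. if x \<le> \<tau> v then p v else 0)" for x
  have M_antimono: "M y \<le> M x" if "x \<le> y" for x y
    unfolding M_def using that assms by (intro mult_left_mono sum_mono) auto
  have tail_bound: "(\<Sum>i<m. if x \<le> t i then R i - R (Suc i) else 0) \<le> M x" for x
  proof (cases "\<exists>i<m. x \<le> t i")
    case False
    then show ?thesis
      unfolding M_def using assms by (auto intro!: mult_nonneg_nonneg sum_nonneg)
  next
    case True
    define i0 where "i0 = (LEAST i. i < m \<and> x \<le> t i)"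
    have i0: "i0 < m" "x \<le> t i0"
      using LeastI_ex[OF True] unfolding i0_def by auto
    have before_i0: "t i < x" if "i < i0" for i
      using not_less_Least[of i "\<lambda>i. i < m \<and> x \<le> t i"] that i0 unfolding i0_def by auto
    have "(\<Sum>i<m. if x \<le> t i then R i - R (Suc i) else 0)
        \<le> (\<Sum>i<m. if i0 \<le> i then R i - R (Suc i) else 0)"
      using R_decr by (intro sum_mono) (auto simp: not_le dest: before_i0)
    also have "\<dots> = (\<Sum>i\<in>{i0..<m}. R i - R (Suc i))"
      by (rule sum.mono_neutral_cong_right) auto
    also have "\<dots> = R i0 - R m"
      using sum_Suc_diff'[of i0 m "\<lambda>i. - R i"] i0 by simp
    also have "\<dots> \<le> M (t i0)"
      using R_le i0 \<open>0 \<le> R m\<close> unfolding M_def by auto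
    also have "\<dots> \<le> M x"
      using M_antimono[OF i0(2)] .
    finally show ?thesis .
  qed
  have "M x = (\<Sum>v\<in>V. if x \<le> \<tau> v then c * p v else 0)" for x
    unfolding M_def sum_distrib_left by (intro sum.cong) auto
  then have "(\<Sum>i<m. (R i - R (Suc i)) * t i) \<le> (\<Sum>v\<in>V. (c * p v) * \<tau> v)"
    using assms tail_bound by (intro sum_mult_le_of_tails_le) auto
  then show ?thesis
    by (simp add: sum_distrib_left mult.assoc)
qed

section \<open>Expanding searches\<close>

lemma visited_Suc: "k < length \<sigma> \<Longrightarrow> visited r \<sigma> (Suc k) = visited r \<sigma> k \<union> \<sigma> ! k"
  unfolding visited_def by (auto simp: take_Suc_conv_app_nth)

lemma visited_mono: "k \<le> l \<Longrightarrow> visited r \<sigma> k \<subseteq> visited r \<sigma> l"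
  unfolding visited_def using set_take_subset_set_take[of k l \<sigma>] by auto

lemma expanding_search_nth:
  assumes "expanding_search W F r \<sigma>" "k < length \<sigma>"
  obtains u w where "\<sigma> ! k \<in> F" "\<sigma> ! k = {u, w}" "u \<in> visited r \<sigma> k" "w \<notin> visited r \<sigma> k"
  using assms unfolding expanding_search_def by auto

lemma set_expanding_search: "expanding_search W F r \<sigma> \<Longrightarrow> set \<sigma> \<subseteq> F"
  unfolding expanding_search_def by (auto simp: in_set_conv_nth)

lemma expanding_search_visited:
  assumes es: "expanding_search W F r \<sigma>" and F: "\<forall>e\<in>F. e \<subseteq> W" and "finite W" "r \<in> W"
    and "k \<le> length \<sigma>"
  shows "visited r \<sigma> k \<subseteq> W \<and> card (visited r \<sigma> k) = Suc k"
  using \<open>k \<le> length \<sigma>\<close>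
proof (induction k)
  case 0
  then show ?case using assms by (simp add: visited_def)
next
  case (Suc k)
  then have k: "k < length \<sigma>" by simp
  obtain u w where uw: "\<sigma> ! k \<in> F" "\<sigma> ! k = {u, w}" "u \<in> visited r \<sigma> k" "w \<notin> visited r \<sigma> k"
    using expanding_search_nth[OF es k] .
  have "visited r \<sigma> (Suc k) = insert w (visited r \<sigma> k)"
    using visited_Suc[OF k] uw by auto
  moreover have "finite (visited r \<sigma> k)"
    using Suc k \<open>finite W\<close> finite_subset by auto
  ultimately show ?case
    using Suc k uw F by auto
qed

lemma visited_length:
  assumes es: "expanding_search W F r \<sigma>" and "\<forall>e\<in>F. e \<subseteq> W" "finite W" "r \<in> W"
  shows "visited r \<sigma> (length \<sigma>) = W"
proof -
  have "visited r \<sigma> (length \<sigma>) \<subseteq> W" "card (visited r \<sigma> (length \<sigma>)) = Suc (length \<sigma>)"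
    using expanding_search_visited[OF assms] by auto
  moreover have "Suc (length \<sigma>) = card W"
    using es assms unfolding expanding_search_def
    by (simp add: card_Diff_singleton) (metis Suc_pred card_gt_0_iff empty_iff)
  ultimately show ?thesis
    using assms by (simp add: card_subset_eq)
qed

lemma expanding_search_distinct:
  assumes es: "expanding_search W F r \<sigma>"
  shows "distinct \<sigma>"
proof -
  have "\<sigma> ! a \<noteq> \<sigma> ! b" if "a < b" "b < length \<sigma>" for a b
  proof -
    obtain u w where "\<sigma> ! b = {u, w}" "w \<notin> visited r \<sigma> b"
      using expanding_search_nth[OF es \<open>b < length \<sigma>\<close>] by metis
    moreover have "\<sigma> ! a \<in> set (take b \<sigma>)"
      using that by (auto simp: in_set_conv_nth)
    ultimately show ?thesis
      unfolding visited_def by auto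
  qed
  then show ?thesis
    unfolding distinct_conv_nth by (metis linorder_neqE_nat)
qed

lemma search_time_append_le:
  assumes "v \<in> \<Union>(set xs)" "\<forall>e\<in>set xs. 0 \<le> lam e"
  shows "search_time lam r (xs @ ys) v \<le> sum_list (map lam xs)"
proof -
  have sum_take_le: "sum_list (map lam (take k xs)) \<le> sum_list (map lam xs)" for k
  proof -
    have "0 \<le> sum_list (map lam (drop k xs))"
      using assms(2) by (intro sum_list_nonneg) (auto dest: in_set_dropD)
    then show ?thesis
      by (subst (2) append_take_drop_id[symmetric, of xs k]) (simp del: append_take_drop_id)
  qed
  obtain k0 where k0: "k0 < length xs" "v \<in> xs ! k0"
    using assms(1) by (auto simp: in_set_conv_nth)
  define l where "l = (LEAST k. k < length (xs @ ys) \<and> v \<in> (xs @ ys) ! k)"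
  have "l \<le> k0"
    unfolding l_def using k0 by (intro Least_le) (simp add: nth_append)
  then have take_eq: "take (Suc l) (xs @ ys) = take (Suc l) xs"
    using k0 by simp
  have "search_time lam r (xs @ ys) v
      = (if v = r then 0 else sum_list (map lam (take (Suc l) (xs @ ys))))"
    unfolding search_time_def l_def ..
  then show ?thesis
    unfolding take_eq using sum_take_le[of 0] sum_take_le[of "Suc l"] by simp
qed

lemma search_time_eq_prefix:
  assumes es: "expanding_search W F r \<sigma>" and "\<forall>e\<in>F. e \<subseteq> W" "finite W" "r \<in> W"
    and v: "v \<in> W" "v \<noteq> r"
  obtains l where "l < length \<sigma>" "v \<in> visited r \<sigma> (Suc l)"
    "search_time lam r \<sigma> v = sum_list (map lam (take (Suc l) \<sigma>))"
proof -
  have "v \<in> visited r \<sigma> (length \<sigma>)"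
    using visited_length[OF es assms(2-4)] v by simp
  then have ex: "\<exists>k. k < length \<sigma> \<and> v \<in> \<sigma> ! k"
    using v unfolding visited_def by (auto simp: in_set_conv_nth)
  define l where "l = (LEAST k. k < length \<sigma> \<and> v \<in> \<sigma> ! k)"
  have l: "l < length \<sigma>" "v \<in> \<sigma> ! l"
    using LeastI_ex[OF ex] unfolding l_def by auto
  show thesis
  proof
    show "l < length \<sigma>" by (fact l)
    show "v \<in> visited r \<sigma> (Suc l)"
      using visited_Suc[OF l(1)] l(2) by auto
    show "search_time lam r \<sigma> v = sum_list (map lam (take (Suc l) \<sigma>))"
      using v unfolding search_time_def l_def by simp
  qed
qed

lemma search_time_le_imp_visited:
  assumes es: "expanding_search W F r \<sigma>" and "\<forall>e\<in>F. e \<subseteq> W" "finite W" "r \<in> W"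
    and "0 \<le> x"
  obtains k where "k \<le> length \<sigma>" "sum_list (map lam (take k \<sigma>)) \<le> x"
    "{v \<in> W. search_time lam r \<sigma> v \<le> x} \<subseteq> visited r \<sigma> k"
proof -
  define P where "P k \<longleftrightarrow> k \<le> length \<sigma> \<and> sum_list (map lam (take k \<sigma>)) \<le> x" for k
  define k where "k = (GREATEST k. P k)"
  have "P 0"
    unfolding P_def using \<open>0 \<le> x\<close> by simp
  then have k: "P k"
    unfolding k_def by (rule GreatestI_nat[where b = "length \<sigma>"]) (simp add: P_def)
  have "v \<in> visited r \<sigma> k" if v: "v \<in> W" "search_time lam r \<sigma> v \<le> x" for v
  proof (cases "v = r")
    case True
    then show ?thesis by (simp add: visited_def)
  next
    case False
    obtain l where l: "l < length \<sigma>" "v \<in> visited r \<sigma> (Suc l)"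
      "search_time lam r \<sigma> v = sum_list (map lam (take (Suc l) \<sigma>))"
      using search_time_eq_prefix[OF es assms(2-4) v(1) False] .
    have "P (Suc l)"
      unfolding P_def using l(1,3) v(2) by simp
    then have "Suc l \<le> k"
      unfolding k_def by (rule Greatest_le_nat[where b = "length \<sigma>"]) (simp add: P_def)
    then have "visited r \<sigma> (Suc l) \<subseteq> visited r \<sigma> k"
      by (rule visited_mono)
    with l(2) show ?thesis by blast
  qed
  with k show thesis
    using that unfolding P_def by auto
qed

lemma search_time_nonneg: "\<forall>e\<in>set \<sigma>. 0 \<le> lam e \<Longrightarrow> 0 \<le> search_time lam r \<sigma> v"
  unfolding search_time_def by (auto intro!: sum_list_nonneg dest!: in_set_takeD)

lemma sum_list_concat_take:
  "n \<le> length xss \<Longrightarrow> sum_list (map f (concat (take n xss))) = (\<Sum>j<n. sum_list (map f (xss ! j)))"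
  by (induction n) (auto simp: take_Suc_conv_app_nth)

section \<open>Contraction\<close>

lemma simple_graph_edge_subset: "simple_graph V E \<Longrightarrow> e \<in> E \<Longrightarrow> e \<subseteq> V"
  unfolding simple_graph_def by fastforce

lemma simple_graph_finite_edges:
  assumes "simple_graph V E"
  shows "finite E"
proof -
  have "E \<subseteq> Pow V"
    using simple_graph_edge_subset[OF assms] by blast
  then show ?thesis
    using assms unfolding simple_graph_def by (meson finite_Pow_iff finite_subset)
qed

lemma contr_len_pos:
  assumes graph: "simple_graph V E" and len_pos: "\<forall>e\<in>E. lam e > 0" and "r \<in> S"
    and e: "e \<in> contr_edges V E r S"
  shows "contr_len E lam r S e > 0"
proof (cases "e \<inter> S = {}")
  case True
  then show ?thesis
    using e len_pos \<open>r \<in> S\<close> unfolding contr_edges_def contr_len_def by auto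
next
  case False
  then obtain v w where w: "e = {r, w}" "w \<in> V - S" "v \<in> S" "{v, w} \<in> E"
    using e unfolding contr_edges_def by auto
  let ?C = "{e' \<in> E. e' \<inter> S \<noteq> {} \<and> e' - S = e - {r}}"
  have "{v, w} \<in> ?C"
    using w \<open>r \<in> S\<close> by auto
  moreover have "finite ?C"
    using simple_graph_finite_edges[OF graph] by auto
  ultimately have "Min (lam ` ?C) > 0"
    using len_pos by (subst Min_gr_iff) auto
  then show ?thesis
    using False unfolding contr_len_def by simp
qed

lemma contr_len_le:
  assumes graph: "simple_graph V E" and "r \<in> S" and e: "{u, w} \<in> E" "u \<in> S" "w \<notin> S"
  shows "contr_len E lam r S {r, w} \<le> lam {u, w}"
proof -
  let ?C = "{e' \<in> E. e' \<inter> S \<noteq> {} \<and> e' - S = {r, w} - {r}}"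
  have "{u, w} \<in> ?C"
    using e \<open>r \<in> S\<close> by auto
  moreover have "finite ?C"
    using simple_graph_finite_edges[OF graph] by auto
  ultimately have "Min (lam ` ?C) \<le> lam {u, w}"
    by (intro Min_le) auto
  then show ?thesis
    using \<open>r \<in> S\<close> unfolding contr_len_def by auto
qed

lemma simple_graph_contr:
  assumes graph: "simple_graph V E" and "r \<in> S"
  shows "simple_graph (insert r (V - S)) (contr_edges V E r S)"
  unfolding simple_graph_def
proof (intro conjI ballI)
  show "finite (insert r (V - S))"
    using graph unfolding simple_graph_def by simp
  fix e assume e: "e \<in> contr_edges V E r S"
  show "\<exists>u w. e = {u, w} \<and> u \<noteq> w \<and> u \<in> insert r (V - S) \<and> w \<in> insert r (V - S)"
  proof (cases "e \<in> E \<and> e \<inter> S = {}")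
    case True
    then obtain u w where "e = {u, w}" "u \<noteq> w" "u \<in> V" "w \<in> V"
      using graph unfolding simple_graph_def by blast
    then show ?thesis
      using True by blast
  next
    case False
    then obtain w where "e = {r, w}" "w \<in> V - S"
      using e unfolding contr_edges_def by blast
    then show ?thesis
      using \<open>r \<in> S\<close> by blast
  qed
qed

lemma finite_tree_verts: "rooted_subtree F s T \<Longrightarrow> finite (tree_verts s T)"
  unfolding rooted_subtree_def using card.infinite by fastforce

lemma rooted_subtree_insert_leaf:
  assumes T: "rooted_subtree F s T" and e: "{u, w} \<in> F"
    and u: "u \<in> tree_verts s T" and w: "w \<notin> tree_verts s T"
  shows "rooted_subtree F s (insert {u, w} T)"
    and "tree_verts s (insert {u, w} T) = insert w (tree_verts s T)"
proof -
  show verts: "tree_verts s (insert {u, w} T) = insert w (tree_verts s T)"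
    using u unfolding tree_verts_def by auto
  have "finite T" "card (tree_verts s T) = card T + 1" "T \<subseteq> F"
    and conn: "connected_from (tree_verts s T) T s"
    using T unfolding rooted_subtree_def by auto
  moreover have "{u, w} \<notin> T"
    using w unfolding tree_verts_def by auto
  moreover have "finite (tree_verts s T)"
    using finite_tree_verts[OF T] .
  moreover have "connected_from (insert w (tree_verts s T)) (insert {u, w} T) s"
    unfolding connected_from_def
  proof
    have reach_mono: "(adj T)\<^sup>* \<subseteq> (adj (insert {u, w} T))\<^sup>*"
      by (rule rtrancl_mono) (auto simp: adj_def)
    fix v assume "v \<in> insert w (tree_verts s T)"
    moreover have "(s, u) \<in> (adj (insert {u, w} T))\<^sup>*"
      using conn u reach_mono unfolding connected_from_def by auto
    moreover have "(u, w) \<in> adj (insert {u, w} T)"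
      by (auto simp: adj_def)
    ultimately show "(s, v) \<in> (adj (insert {u, w} T))\<^sup>*"
      using conn reach_mono unfolding connected_from_def
      by (auto intro: rtrancl_into_rtrancl)
  qed
  ultimately show "rooted_subtree F s (insert {u, w} T)"
    using e w unfolding rooted_subtree_def verts by auto
qed

lemma contr_prefix_subtree:
  assumes graph: "simple_graph V E" and len_nonneg: "\<forall>e\<in>E. 0 \<le> lam e" and "r \<in> S"
    and es: "expanding_search V E r \<sigma>"
  shows "k \<le> length \<sigma> \<Longrightarrow> \<exists>T. rooted_subtree (contr_edges V E r S) r T \<and>
    tree_verts r T = insert r (visited r \<sigma> k - S) \<and>
    sum (contr_len E lam r S) T \<le> sum_list (map lam (take k \<sigma>))"
proof (induction k)
  case 0
  have "rooted_subtree (contr_edges V E r S) r {}"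
    unfolding rooted_subtree_def tree_verts_def connected_from_def by auto
  then show ?case
    by (auto simp: tree_verts_def visited_def)
next
  case (Suc k)
  then have k: "k < length \<sigma>" by simp
  obtain T where T: "rooted_subtree (contr_edges V E r S) r T"
    "tree_verts r T = insert r (visited r \<sigma> k - S)"
    "sum (contr_len E lam r S) T \<le> sum_list (map lam (take k \<sigma>))"
    using Suc.IH k by auto
  obtain u w where uw: "{u, w} \<in> E" "\<sigma> ! k = {u, w}" "u \<in> visited r \<sigma> k" "w \<notin> visited r \<sigma> k"
    using expanding_search_nth[OF es k] by metis
  have visited: "visited r \<sigma> (Suc k) = insert w (visited r \<sigma> k)"
    using visited_Suc[OF k] uw by auto
  have prefix: "sum_list (map lam (take (Suc k) \<sigma>)) = sum_list (map lam (take k \<sigma>)) + lam {u, w}"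
    using k uw by (simp add: take_Suc_conv_app_nth)
  show ?case
  proof (cases "w \<in> S")
    case True
    then show ?thesis
      using T visited prefix len_nonneg uw(1) by fastforce
  next
    case False
    define u' where "u' = (if u \<in> S then r else u)"
    have u': "u' \<in> tree_verts r T" and w: "w \<notin> tree_verts r T"
      using T(2) uw False \<open>r \<in> S\<close> unfolding u'_def by auto
    have e: "{u', w} \<in> contr_edges V E r S"
      using uw False simple_graph_edge_subset[OF graph uw(1)]
      unfolding u'_def contr_edges_def by auto
    have "contr_len E lam r S {u', w} \<le> lam {u, w}"
      using contr_len_le[OF graph \<open>r \<in> S\<close> uw(1) _ False] False
      unfolding u'_def contr_len_def by auto
    moreover have "{u', w} \<notin> T" "finite T"
      using w T(1) unfolding tree_verts_def rooted_subtree_def by auto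
    ultimately have "sum (contr_len E lam r S) (insert {u', w} T)
        \<le> sum_list (map lam (take (Suc k) \<sigma>))"
      using T(3) prefix by simp
    then show ?thesis
      using rooted_subtree_insert_leaf[OF T(1) e u' w] T(2) visited False by auto
  qed
qed

lemma mds_instance_contr:
  assumes graph: "simple_graph V E" and len_pos: "\<forall>e\<in>E. lam e > 0" and "r \<in> S" "r \<in> V"
    and es: "expanding_search V E r \<sigma>" and p_nonneg: "\<forall>v\<in>V. 0 \<le> p v"
    and "greedy_continue V p S"
  shows "mds_instance (insert r (V - S)) (contr_edges V E r S) (contr_len E lam r S) p r"
proof -
  have "\<forall>e\<in>E. 0 \<le> lam e"
    using len_pos by (auto intro: less_imp_le)
  then obtain T where T: "rooted_subtree (contr_edges V E r S) r T"
     "tree_verts r T = insert r (visited r \<sigma> (length \<sigma>) - S)"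
    using contr_prefix_subtree[OF graph _ \<open>r \<in> S\<close> es order.refl] by blast
  have "visited r \<sigma> (length \<sigma>) = V"
    using visited_length[OF es _ _ \<open>r \<in> V\<close>] simple_graph_edge_subset[OF graph] graph
    unfolding simple_graph_def by blast
  moreover obtain v where "v \<in> V - S" "p v > 0"
    using \<open>greedy_continue V p S\<close> unfolding greedy_continue_def by auto
  ultimately have "T \<noteq> {}"
    using T(2) \<open>r \<in> S\<close> unfolding tree_verts_def by auto
  moreover have "finite T" "\<forall>e\<in>T. contr_len E lam r S e > 0"
    using T(1) contr_len_pos[OF graph len_pos \<open>r \<in> S\<close>] unfolding rooted_subtree_def by auto
  ultimately have "mds_feasible (contr_edges V E r S) (contr_len E lam r S) r T"
    using T(1) unfolding mds_feasible_def by (auto intro: sum_pos)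
  then show ?thesis
    unfolding mds_instance_def
    using simple_graph_contr[OF graph \<open>r \<in> S\<close>] contr_len_pos[OF graph len_pos \<open>r \<in> S\<close>]
      p_nonneg \<open>r \<in> V\<close> by auto
qed

lemma finite_mds_feasible:
  assumes "simple_graph W F"
  shows "finite {T. mds_feasible F len s T}"
proof -
  have "{T. mds_feasible F len s T} \<subseteq> Pow F"
    unfolding mds_feasible_def rooted_subtree_def by auto
  then show ?thesis
    using simple_graph_finite_edges[OF assms] by (meson finite_Pow_iff finite_subset)
qed

lemma weight_le_max_density:
  assumes inst: "mds_instance W F len q s" and T: "rooted_subtree F s T" and "q s = 0"
  shows "sum q (tree_verts s T) \<le> max_density F len q s * sum len T"
proof (cases "T = {}")
  case True
  then show ?thesis
    using \<open>q s = 0\<close> by (simp add: tree_verts_def)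
next
  case False
  have "simple_graph W F" "\<forall>e\<in>F. len e > 0"
    using inst unfolding mds_instance_def by auto
  moreover have "finite T" "T \<subseteq> F"
    using T unfolding rooted_subtree_def by auto
  ultimately have pos: "sum len T > 0"
    using False by (intro sum_pos) auto
  then have "mds_feasible F len s T"
    using T unfolding mds_feasible_def by auto
  then have "Defs.density q len s T \<le> max_density F len q s"
    unfolding max_density_def using finite_mds_feasible[OF \<open>simple_graph W F\<close>]
    by (intro Max_ge) auto
  then show ?thesis
    using pos unfolding Defs.density_def by (simp add: divide_le_eq)
qed

lemma expanding_search_tree_edges:
  assumes T: "rooted_subtree F r T" and es: "expanding_search (tree_verts r T) T r \<sigma>"
  shows "distinct \<sigma>" "set \<sigma> = T"
proof -
  show "distinct \<sigma>"
    using expanding_search_distinct[OF es] .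
  have "finite T" and card_T: "card (tree_verts r T) = card T + 1"
    using T unfolding rooted_subtree_def by auto
  moreover have "r \<in> tree_verts r T"
    unfolding tree_verts_def by simp
  ultimately have "length \<sigma> = card T"
    using es unfolding expanding_search_def by (simp add: card_Diff_singleton)
  moreover have "set \<sigma> \<subseteq> T"
    using set_expanding_search[OF es] .
  ultimately show "set \<sigma> = T"
    using card_subset_eq[OF \<open>finite T\<close>] distinct_card[OF \<open>distinct \<sigma>\<close>] by simp
qed

lemma block_length_eq:
  assumes T: "rooted_subtree F r T"
    and es: "expanding_search (tree_verts r T) T r (map (contr_edge r S) b)"
    and replaced: "\<forall>e\<in>set b. e \<inter> S \<noteq> {} \<longrightarrow> lam e = contr_len E lam r S (contr_edge r S e)"
  shows "sum_list (map lam b) = sum (contr_len E lam r S) T"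
proof -
  have "map lam b = map (contr_len E lam r S) (map (contr_edge r S) b)"
    using replaced by (auto simp: contr_edge_def contr_len_def)
  then have "sum_list (map lam b) = sum_list (map (contr_len E lam r S) (map (contr_edge r S) b))"
    by (simp only:)
  also have "\<dots> = sum (contr_len E lam r S) (set (map (contr_edge r S) b))"
    using expanding_search_tree_edges(1)[OF T es] by (rule sum_list_distinct_conv_sum_set)
  finally show ?thesis
    unfolding expanding_search_tree_edges(2)[OF T es] .
qed

lemma block_covers_tree:
  assumes T: "rooted_subtree F r T"
    and es: "expanding_search (tree_verts r T) T r (map (contr_edge r S) b)"
  shows "tree_verts r T - {r} \<subseteq> \<Union>(set b)"
proof
  fix v assume v: "v \<in> tree_verts r T - {r}"
  then obtain e where "e \<in> set b" "v \<in> contr_edge r S e"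
    using expanding_search_tree_edges(2)[OF T es] unfolding tree_verts_def by auto
  then show "v \<in> \<Union>(set b)"
    using v unfolding contr_edge_def by (auto split: if_splits)
qed

section \<open>Analysis of a run of the greedy algorithm\<close>

locale greedy_run =
  fixes V :: "'v set" and E :: "'v set set" and lam :: "'v set \<Rightarrow> real" and p :: "'v \<Rightarrow> real"
    and r :: 'v and \<alpha> :: real and A :: "'v mds_algorithm"
    and m :: nat and bs :: "'v set list list" and rest :: "'v set list"
  assumes graph: "simple_graph V E" and root: "r \<in> V"
    and len_pos: "\<forall>e\<in>E. lam e > 0"
    and p_nonneg: "\<forall>v\<in>V. 0 \<le> p v" and p_root: "p r = 0"
    and alpha_pos: "0 < \<alpha>" and approx: "mds_approx \<alpha> A"
    and running: "\<forall>i<m. greedy_continue V p (greedy_set V E lam p r A i)"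
    and stopped: "\<not> greedy_continue V p (greedy_set V E lam p r A m)"
    and blocks: "length bs = m" "\<forall>i<m. greedy_block V E lam p r A i (bs ! i)"
    and search: "expanding_search V E r (concat bs @ rest)"
begin

abbreviation S :: "nat \<Rightarrow> 'v set" where
  "S i \<equiv> greedy_set V E lam p r A i"

abbreviation T :: "nat \<Rightarrow> 'v set set" where
  "T i \<equiv> greedy_tree V E lam p r A (S i)"

abbreviation clen :: "nat \<Rightarrow> 'v set \<Rightarrow> real" where
  "clen i \<equiv> contr_len E lam r (S i)"

definition L :: "nat \<Rightarrow> real" where
  "L i = sum (clen i) (T i)"

definition R :: "nat \<Rightarrow> real" where
  "R i = sum p (V - S i)"

definition \<rho> :: "nat \<Rightarrow> real" where
  "\<rho> i = Defs.density p (clen i) r (T i)"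

lemma finite_V: "finite V"
  using graph unfolding simple_graph_def by simp

lemma edges_subset: "\<forall>e\<in>E. e \<subseteq> V"
  using simple_graph_edge_subset[OF graph] by blast

lemma len_nonneg: "\<forall>e\<in>E. 0 \<le> lam e"
  using len_pos by (auto intro: less_imp_le)

lemma root_in_S: "r \<in> S i"
  by (induction i) auto

lemma S_mono: "i \<le> j \<Longrightarrow> S i \<subseteq> S j"
  by (induction j rule: dec_induct) auto

lemma contr_instance:
  "i < m \<Longrightarrow> mds_instance (insert r (V - S i)) (contr_edges V E r (S i)) (clen i) p r"
  using mds_instance_contr[OF graph len_pos root_in_S root search p_nonneg] running by blast

lemma tree_feasible: "i < m \<Longrightarrow> mds_feasible (contr_edges V E r (S i)) (clen i) r (T i)"
  and density_ge: "i < m \<Longrightarrow> max_density (contr_edges V E r (S i)) (clen i) p r / \<alpha> \<le> \<rho> i"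
  using approx contr_instance unfolding mds_approx_def \<rho>_def greedy_tree_def by auto

lemma tree_rooted: "i < m \<Longrightarrow> rooted_subtree (contr_edges V E r (S i)) r (T i)"
  using tree_feasible unfolding mds_feasible_def by blast

lemma tree_verts_subset: "i < m \<Longrightarrow> tree_verts r (T i) \<subseteq> insert r (V - S i)"
  using tree_feasible simple_graph_edge_subset[OF simple_graph_contr[OF graph root_in_S]]
  unfolding mds_feasible_def rooted_subtree_def tree_verts_def by blast

lemma L_pos: "i < m \<Longrightarrow> 0 < L i"
  using tree_feasible unfolding mds_feasible_def L_def by blast

lemma R_diff: "i < m \<Longrightarrow> R i - R (Suc i) = \<rho> i * L i"
proof -
  assume "i < m"
  let ?U = "tree_verts r (T i)"
  have "R i = sum p (V - S i - (?U - {r})) + sum p (?U - {r})"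
    unfolding R_def using finite_V tree_verts_subset[OF \<open>i < m\<close>] by (intro sum.subset_diff) auto
  also have "V - S i - (?U - {r}) = V - S (Suc i)"
    using root_in_S[of i] by auto
  also have "sum p (?U - {r}) = sum p ?U"
  proof -
    have "finite ?U"
      using finite_tree_verts[OF tree_rooted[OF \<open>i < m\<close>]] .
    moreover have "r \<in> ?U"
      unfolding tree_verts_def by simp
    ultimately show ?thesis
      using sum.remove[of ?U r p] p_root by simp
  qed
  also have "\<dots> = \<rho> i * L i"
    using L_pos[OF \<open>i < m\<close>] unfolding \<rho>_def L_def Defs.density_def by simp
  finally show ?thesis
    unfolding R_def by simp
qed

lemma search_len_nonneg: "expanding_search V E r \<sigma> \<Longrightarrow> \<forall>e\<in>set \<sigma>. 0 \<le> lam e"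
  using len_nonneg by (auto dest!: set_expanding_search)

lemma rho_nonneg: "i < m \<Longrightarrow> 0 \<le> \<rho> i"
proof -
  assume "i < m"
  have "0 \<le> p v" if "v \<in> tree_verts r (T i)" for v
    using that tree_verts_subset[OF \<open>i < m\<close>] p_nonneg p_root by auto
  then have "0 \<le> sum p (tree_verts r (T i))"
    by (rule sum_nonneg)
  then show ?thesis
    using L_pos[OF \<open>i < m\<close>] unfolding \<rho>_def Defs.density_def L_def by simp
qed

lemma prefix_mass_le:
  assumes es: "expanding_search V E r \<sigma>" and "i < m" and "k \<le> length \<sigma>"
  shows "sum p (visited r \<sigma> k - S i) \<le> \<alpha> * \<rho> i * sum_list (map lam (take k \<sigma>))"
proof -
  obtain U where U: "rooted_subtree (contr_edges V E r (S i)) r U"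
      "tree_verts r U = insert r (visited r \<sigma> k - S i)"
      "sum (clen i) U \<le> sum_list (map lam (take k \<sigma>))"
    using contr_prefix_subtree[OF graph len_nonneg root_in_S es \<open>k \<le> length \<sigma>\<close>] by blast
  have "finite (visited r \<sigma> k - S i)"
    using expanding_search_visited[OF es edges_subset finite_V root \<open>k \<le> length \<sigma>\<close>] finite_V
    by (auto intro: finite_subset)
  then have "sum p (visited r \<sigma> k - S i) = sum p (tree_verts r U)"
    unfolding U(2) using p_root by (simp add: sum.insert_if)
  also have "\<dots> \<le> max_density (contr_edges V E r (S i)) (clen i) p r * sum (clen i) U"
    using weight_le_max_density[OF contr_instance[OF \<open>i < m\<close>] U(1) p_root] .
  also have "\<dots> \<le> \<alpha> * \<rho> i * sum_list (map lam (take k \<sigma>))"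
  proof (rule mult_mono)
    show "max_density (contr_edges V E r (S i)) (clen i) p r \<le> \<alpha> * \<rho> i"
      using density_ge[OF \<open>i < m\<close>] alpha_pos by (simp add: divide_le_eq mult.commute)
    show "0 \<le> \<alpha> * \<rho> i"
      using rho_nonneg[OF \<open>i < m\<close>] alpha_pos by simp
    have "\<forall>e\<in>U. 0 < clen i e"
      using U(1) contr_len_pos[OF graph len_pos root_in_S] unfolding rooted_subtree_def by blast
    then show "0 \<le> sum (clen i) U"
      by (meson less_imp_le sum_nonneg)
  qed (fact U(3))
  finally show ?thesis .
qed

lemma R_pos: "i < m \<Longrightarrow> 0 < R i"
proof -
  assume "i < m"
  then obtain v where "v \<in> V - S i" "0 < p v"
    using running unfolding greedy_continue_def by blast
  then show ?thesis
    unfolding R_def using finite_V p_nonneg by (intro sum_pos2) auto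
qed

lemma rho_pos: "i < m \<Longrightarrow> 0 < \<rho> i"
proof -
  assume "i < m"
  let ?\<sigma> = "concat bs @ rest"
  have "R i = sum p (visited r ?\<sigma> (length ?\<sigma>) - S i)"
    unfolding R_def visited_length[OF search edges_subset finite_V root] ..
  also have "\<dots> \<le> \<alpha> * \<rho> i * sum_list (map lam ?\<sigma>)"
    using prefix_mass_le[OF search \<open>i < m\<close> order.refl] by simp
  finally have "\<rho> i \<noteq> 0"
    using R_pos[OF \<open>i < m\<close>] by auto
  then show ?thesis
    using rho_nonneg[OF \<open>i < m\<close>] by simp
qed

lemma found_mass_le:
  assumes es: "expanding_search V E r \<sigma>" and "i < m" and "0 \<le> x"
  shows "(\<Sum>v\<in>V - S i. if search_time lam r \<sigma> v \<le> x then p v else 0) \<le> \<alpha> * \<rho> i * x"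
proof -
  obtain k where k: "k \<le> length \<sigma>" "sum_list (map lam (take k \<sigma>)) \<le> x"
    "{v \<in> V. search_time lam r \<sigma> v \<le> x} \<subseteq> visited r \<sigma> k"
    using search_time_le_imp_visited[OF es edges_subset finite_V root \<open>0 \<le> x\<close>] .
  have "(\<Sum>v\<in>V - S i. if search_time lam r \<sigma> v \<le> x then p v else 0)
      = sum p {v \<in> V - S i. search_time lam r \<sigma> v \<le> x}"
    using finite_V by (intro sum.inter_filter[symmetric]) simp
  also have "\<dots> \<le> sum p (visited r \<sigma> k - S i)"
  proof (rule sum_mono2)
    show "finite (visited r \<sigma> k - S i)"
      using expanding_search_visited[OF es edges_subset finite_V root k(1)] finite_V
      by (auto intro: finite_subset)
    show "{v \<in> V - S i. search_time lam r \<sigma> v \<le> x} \<subseteq> visited r \<sigma> k - S i"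
      using k(3) by blast
    show "\<And>v. v \<in> visited r \<sigma> k - S i - {v \<in> V - S i. search_time lam r \<sigma> v \<le> x} \<Longrightarrow> 0 \<le> p v"
      using expanding_search_visited[OF es edges_subset finite_V root k(1)] p_nonneg by blast
  qed
  also have "\<dots> \<le> \<alpha> * \<rho> i * sum_list (map lam (take k \<sigma>))"
    using prefix_mass_le[OF es \<open>i < m\<close> k(1)] .
  also have "\<dots> \<le> \<alpha> * \<rho> i * x"
    using k(2) rho_nonneg[OF \<open>i < m\<close>] alpha_pos by (intro mult_left_mono) auto
  finally show ?thesis .
qed

text \<open>The time at which the bound of \<open>found_mass_le\<close> reaches \<open>R i / 2\<close>.\<close>
definition threshold :: "nat \<Rightarrow> real" where
  "threshold i = R i / (2 * \<alpha> * \<rho> i)"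

lemma R_le_late_mass:
  assumes es: "expanding_search V E r \<sigma>" and "i < m"
  shows "R i \<le> 2 * (\<Sum>v\<in>V. if threshold i \<le> search_time lam r \<sigma> v then p v else 0)"
proof -
  let ?st = "search_time lam r \<sigma>"
  let ?late = "\<lambda>v. if threshold i \<le> ?st v then p v else 0"
  let ?early = "\<lambda>v. if threshold i \<le> ?st v then 0 else p v"
  have "0 \<le> threshold i"
    unfolding threshold_def using R_pos[OF \<open>i < m\<close>] rho_pos[OF \<open>i < m\<close>] alpha_pos by simp
  have "R i = sum ?late (V - S i) + sum ?early (V - S i)"
    unfolding R_def sum.distrib[symmetric] by (intro sum.cong) auto
  moreover have "sum ?early (V - S i) \<le> (\<Sum>v\<in>V - S i. if ?st v \<le> threshold i then p v else 0)"
    using p_nonneg by (intro sum_mono) auto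
  moreover have "\<dots> \<le> \<alpha> * \<rho> i * threshold i"
    using found_mass_le[OF es \<open>i < m\<close> \<open>0 \<le> threshold i\<close>] .
  moreover have "\<alpha> * \<rho> i * threshold i = R i / 2"
    unfolding threshold_def using rho_pos[OF \<open>i < m\<close>] alpha_pos by simp
  moreover have "sum ?late (V - S i) \<le> sum ?late V"
    using finite_V p_nonneg by (intro sum_mono2) auto
  ultimately show ?thesis
    by linarith
qed

lemma greedy_bound_le_cost:
  assumes es: "expanding_search V E r \<sigma>"
  shows "(\<Sum>i<m. L i * R i) \<le> 4 * \<alpha> * search_cost V p lam r \<sigma>"
proof -
  have "L i * R i = 2 * \<alpha> * ((R i - R (Suc i)) * threshold i)" if "i < m" for i
    unfolding threshold_def R_diff[OF that] using rho_pos[OF that] alpha_pos by simp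
  then have "(\<Sum>i<m. L i * R i) = 2 * \<alpha> * (\<Sum>i<m. (R i - R (Suc i)) * threshold i)"
    by (simp add: sum_distrib_left)
  moreover have "(\<Sum>i<m. (R i - R (Suc i)) * threshold i)
      \<le> 2 * (\<Sum>v\<in>V. p v * search_time lam r \<sigma> v)"
  proof (rule telescoping_sum_mult_le)
    show "\<forall>v\<in>V. 0 \<le> p v \<and> 0 \<le> search_time lam r \<sigma> v"
      using p_nonneg search_time_nonneg[OF search_len_nonneg[OF es]] by blast
    show "\<forall>i<m. 0 \<le> threshold i"
      unfolding threshold_def using R_pos rho_pos alpha_pos by (auto intro: less_imp_le)
    show "\<forall>i<m. R (Suc i) \<le> R i"
    proof (intro allI impI)
      fix i assume "i < m"
      then have "0 \<le> \<rho> i * L i"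
        using rho_nonneg L_pos by (simp add: less_imp_le)
      then show "R (Suc i) \<le> R i"
        using R_diff[OF \<open>i < m\<close>] by simp
    qed
    show "0 \<le> R m"
      unfolding R_def using p_nonneg by (auto intro: sum_nonneg)
    show "\<forall>i<m. R i \<le> 2 * (\<Sum>v\<in>V. if threshold i \<le> search_time lam r \<sigma> v then p v else 0)"
      using R_le_late_mass[OF es] by blast
  qed (use finite_V in auto)
  ultimately show ?thesis
    using alpha_pos unfolding search_cost_def by simp
qed

lemma block_search:
  assumes "i < m"
  shows "expanding_search (tree_verts r (T i)) (T i) r (map (contr_edge r (S i)) (bs ! i))"
    and "\<forall>e\<in>set (bs ! i). e \<inter> S i \<noteq> {} \<longrightarrow> lam e = clen i (contr_edge r (S i) e)"
  using blocks(2) assms unfolding greedy_block_def Let_def by auto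

lemma block_length: "i < m \<Longrightarrow> sum_list (map lam (bs ! i)) = L i"
  unfolding L_def by (rule block_length_eq[OF tree_rooted block_search])

lemma block_covers: "i < m \<Longrightarrow> tree_verts r (T i) - {r} \<subseteq> \<Union>(set (bs ! i))"
  by (rule block_covers_tree[OF tree_rooted block_search(1)])

lemma search_time_greedy_le:
  assumes "v \<in> V" "0 < p v"
  shows "search_time lam r (concat bs @ rest) v \<le> (\<Sum>j<m. if v \<notin> S j then L j else 0)"
proof -
  have "v \<in> S m"
    using stopped assms unfolding greedy_continue_def by auto
  moreover have "v \<notin> S 0"
    using assms p_root by auto
  ultimately obtain k where k: "k < m" "\<forall>j\<le>k. v \<notin> S j" "v \<in> S (Suc k)"
    using ex_least_nat_less[of "\<lambda>j. v \<in> S j" m] by blast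
  have not_in_S: "v \<notin> S j \<longleftrightarrow> j \<le> k" if "j < m" for j
    using k S_mono[of "Suc k" j] by (cases "j \<le> k") auto
  have "v \<in> tree_verts r (T k) - {r}"
    using k assms p_root by auto
  then obtain e where "e \<in> set (bs ! k)" "v \<in> e"
    using block_covers[OF k(1)] by blast
  moreover have "bs ! k \<in> set (take (Suc k) bs)"
    using k(1) blocks(1) by (simp add: take_Suc_conv_app_nth)
  ultimately have "v \<in> \<Union>(set (concat (take (Suc k) bs)))"
    by auto
  moreover have "concat bs @ rest = concat (take (Suc k) bs) @ (concat (drop (Suc k) bs) @ rest)"
    by (metis append.assoc append_take_drop_id concat_append)
  moreover have "\<forall>e\<in>set (concat (take (Suc k) bs)). 0 \<le> lam e"
    using search_len_nonneg[OF search] by (auto dest: in_set_takeD)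
  ultimately have "search_time lam r (concat bs @ rest) v
      \<le> sum_list (map lam (concat (take (Suc k) bs)))"
    using search_time_append_le by metis
  also have "\<dots> = (\<Sum>j<Suc k. L j)"
    using k(1) blocks(1) block_length by (simp add: sum_list_concat_take)
  also have "\<dots> = (\<Sum>j<m. if v \<notin> S j then L j else 0)"
  proof -
    have "{..<m} \<inter> {j. v \<notin> S j} = {..<Suc k}"
    proof
      show "{..<m} \<inter> {j. v \<notin> S j} \<subseteq> {..<Suc k}"
        using not_in_S by auto
      show "{..<Suc k} \<subseteq> {..<m} \<inter> {j. v \<notin> S j}"
        using k(1,2) by auto
    qed
    then show ?thesis
      using sum.inter_restrict[of "{..<m}" L "{j. v \<notin> S j}"] by simp
  qed
  finally show ?thesis .
qed

lemma greedy_cost_le: "search_cost V p lam r (concat bs @ rest) \<le> (\<Sum>i<m. L i * R i)"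
proof -
  have "search_cost V p lam r (concat bs @ rest)
      \<le> (\<Sum>v\<in>V. p v * (\<Sum>j<m. if v \<notin> S j then L j else 0))"
    unfolding search_cost_def
  proof (rule sum_mono)
    fix v assume "v \<in> V"
    then show "p v * search_time lam r (concat bs @ rest) v
        \<le> p v * (\<Sum>j<m. if v \<notin> S j then L j else 0)"
      using search_time_greedy_le p_nonneg by (cases "p v = 0") (auto intro: mult_left_mono)
  qed
  also have "\<dots> = (\<Sum>v\<in>V. \<Sum>j<m. if v \<notin> S j then L j * p v else 0)"
    unfolding sum_distrib_left by (intro sum.cong refl) auto
  also have "\<dots> = (\<Sum>j<m. \<Sum>v\<in>V. if v \<notin> S j then L j * p v else 0)"
    by (rule sum.swap)
  also have "\<dots> = (\<Sum>j<m. L j * R j)"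
  proof (rule sum.cong)
    fix j
    have "V \<inter> - S j = V - S j" by blast
    then show "(\<Sum>v\<in>V. if v \<notin> S j then L j * p v else 0) = L j * R j"
      unfolding R_def sum_distrib_left
      using sum.inter_restrict[OF finite_V, of "\<lambda>v. L j * p v" "- S j"] by simp
  qed simp
  finally show ?thesis .
qed

end

theorem theorem2:
  fixes V :: "'v set" and E :: "'v set set" and lam :: "'v set \<Rightarrow> real"
    and p :: "'v \<Rightarrow> real" and r :: 'v and \<alpha> :: real and A :: "'v mds_algorithm"
    and \<sigma>g \<sigma>opt :: "'v set list"
  assumes graph: "simple_graph V E" and root: "r \<in> V"
    and conn: "connected_from V E r"
    and len_pos: "\<forall>e\<in>E. lam e > 0"
    and p_nonneg: "\<forall>v\<in>V. 0 \<le> p v \<and> p v \<le> 1" and p_root: "p r = 0"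
    and p_sum: "(\<Sum>v\<in>V. p v) = 1"
    and alpha: "\<alpha> \<ge> 1"
    and approx: "mds_approx \<alpha> A"
    and greedy: "greedy_output V E lam p r A \<sigma>g"
    and opt: "expanding_search V E r \<sigma>opt"
    and opt_min: "\<forall>\<sigma>. expanding_search V E r \<sigma> \<longrightarrow>
                    search_cost V p lam r \<sigma>opt \<le> search_cost V p lam r \<sigma>"
  shows "search_cost V p lam r \<sigma>g \<le> 4 * \<alpha> * search_cost V p lam r \<sigma>opt"
proof -
  obtain m bs rest where run:
    "\<forall>i<m. greedy_continue V p (greedy_set V E lam p r A i)"
    "\<not> greedy_continue V p (greedy_set V E lam p r A m)"
    "length bs = m" "\<forall>i<m. greedy_block V E lam p r A i (bs ! i)"
    "\<sigma>g = concat bs @ rest" "expanding_search V E r \<sigma>g"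
    using greedy unfolding greedy_output_def by blast
  interpret greedy_run V E lam p r \<alpha> A m bs rest
    using graph root len_pos p_nonneg p_root alpha approx run by unfold_locales auto
  have "search_cost V p lam r \<sigma>g \<le> (\<Sum>i<m. L i * R i)"
    using greedy_cost_le run(5) by simp
  \<comment> \<open>The bound holds against every expanding search.\<close>
  also have "\<dots> \<le> 4 * \<alpha> * search_cost V p lam r \<sigma>opt"
    using greedy_bound_le_cost[OF opt] .
  finally show ?thesis .
qed

end
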